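(* Fix $\alpha\in(0,1/2)$ and $q_1,q_3\in(0,1)$. Define $m^*(3/4,3/4)=16\alpha$, $m^*(3/4,1/4)=m^*(1/4,3/4)=\frac{8(1-2\alpha)}{3}$, $m^*(1/4,1/4)=\frac{16\alpha}{9}$, $m^*=\frac{16(4\alpha+3)}{9}$, $\overline{q}^*=\frac{8\alpha+3}{8\alpha+6}$, $\overline{\lambda}^*=1/m^*$, $$\overline{q}=\frac{1}{m^*}\Big[\big(m^*(\tfrac34,\tfrac34)+m^*(\tfrac34,\tfrac14)\big)q_3+\big(m^*(\tfrac14,\tfrac34)+m^*(\tfrac14,\tfrac14)\big)q_1\Big],$$ $$\overline{\lambda}=\frac{1}{m^*}\Big(m^*(\tfrac34,\tfrac34)\tfrac{1-q_3}{4}+m^*(\tfrac34,\tfrac14)\tfrac{3(1-q_3)}{4}+m^*(\tfrac14,\tfrac34)\tfrac{1-q_1}{4}+m^*(\tfrac14,\tfrac14)\tfrac{3(1-q_1)}{4}\Big).$$ If $\frac{(4\alpha-3)q_1+8\alpha+3}{12\alpha+3}<q_3<\frac{5-2q_1}{6}$ and either $q_1<1/4<\alpha$ or $\alpha<1/4<q_1$ holds, then $\overline{q}>\overline{q}^*$ and $\overline{\lambda}>\overline{\lambda}^*$.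
   Context: Interpretation: $m^*(x,e)$ is the steady-state mass of users of type $(x,e)$ under the status quo algorithm with recommendation quality $q^*(x)=x$ and per-period churn probability $(1-q(x))(1-e)$; $\overline{q},\overline{\lambda}$ are the ARQ and churn rate observed in a one-period A/B experiment where the treatment (quality $q_1$ for segment $x=1/4$, $q_3$ for $x=3/4$) is applied to the status quo steady-state population; $\overline{q}^*,\overline{\lambda}^*$ are the status quo's values. *)

theory Defs
  imports Complex_Main
begin

end

theory Submission
  imports Defs
begin

(* Substituting the steady-state masses, the segment weights collapse: m* qbar and m* lbar are
   affine in (q1, q3), and since m* > 0 the two conclusions are exactly the two bounds on q3. *)

lemma ab_weighted_quality_eq:
  fixes \<alpha> q1 q3 :: real
  shows "(16*\<alpha> + 8*(1 - 2*\<alpha>)/3)*q3 + (8*(1 - 2*\<alpha>)/3 + 16*\<alpha>/9)*q1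
           = 8/9 * ((12*\<alpha> + 3)*q3 - (4*\<alpha> - 3)*q1)"
  by (simp add: field_simps)

lemma ab_weighted_churn_eq:
  fixes \<alpha> q1 q3 :: real
  shows "16*\<alpha>*(1 - q3)/4 + 8*(1 - 2*\<alpha>)/3*(3*(1 - q3)/4)
           + 8*(1 - 2*\<alpha>)/3*(1 - q1)/4 + 16*\<alpha>/9*(3*(1 - q1)/4)
           = 2*(1 - q3) + 2*(1 - q1)/3"
  by (simp add: field_simps)

lemma ab_quality_gt_status_quo_iff:
  fixes \<alpha> q1 q3 :: real
  assumes "0 < 4*\<alpha> + 3"
  shows "(8*\<alpha> + 3)/(8*\<alpha> + 6)
           < (1/(16*(4*\<alpha> + 3)/9)) * ((16*\<alpha> + 8*(1 - 2*\<alpha>)/3)*q3 + (8*(1 - 2*\<alpha>)/3 + 16*\<alpha>/9)*q1)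
         \<longleftrightarrow> (4*\<alpha> - 3)*q1 + 8*\<alpha> + 3 < (12*\<alpha> + 3)*q3"
proof -
  have "(8*\<alpha> + 3)/(8*\<alpha> + 6) = (8*\<alpha> + 3) / (2*(4*\<alpha> + 3))"
    by (simp add: algebra_simps)
  moreover have "(1/(16*(4*\<alpha> + 3)/9)) * (8/9 * ((12*\<alpha> + 3)*q3 - (4*\<alpha> - 3)*q1))
                   = ((12*\<alpha> + 3)*q3 - (4*\<alpha> - 3)*q1) / (2*(4*\<alpha> + 3))"
    using assms by (simp add: field_simps)
  moreover have "(8*\<alpha> + 3) / (2*(4*\<alpha> + 3)) < ((12*\<alpha> + 3)*q3 - (4*\<alpha> - 3)*q1) / (2*(4*\<alpha> + 3))
                   \<longleftrightarrow> 8*\<alpha> + 3 < (12*\<alpha> + 3)*q3 - (4*\<alpha> - 3)*q1"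
    using assms by (simp add: divide_less_cancel)
  ultimately show ?thesis
    by (simp only: ab_weighted_quality_eq) argo
qed

lemma ab_churn_gt_status_quo_iff:
  fixes \<alpha> q1 q3 :: real
  assumes "0 < 4*\<alpha> + 3"
  shows "1/(16*(4*\<alpha> + 3)/9)
           < (1/(16*(4*\<alpha> + 3)/9)) * (16*\<alpha>*(1 - q3)/4 + 8*(1 - 2*\<alpha>)/3*(3*(1 - q3)/4)
               + 8*(1 - 2*\<alpha>)/3*(1 - q1)/4 + 16*\<alpha>/9*(3*(1 - q1)/4))
         \<longleftrightarrow> 6*q3 < 5 - 2*q1"
proof -
  have "0 < 1/(16*(4*\<alpha> + 3)/9)"
    using assms by simp
  then have "1/(16*(4*\<alpha> + 3)/9) < (1/(16*(4*\<alpha> + 3)/9)) * (2*(1 - q3) + 2*(1 - q1)/3)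
               \<longleftrightarrow> 1 < 2*(1 - q3) + 2*(1 - q1)/3"
    by (metis mult.right_neutral mult_less_cancel_left_pos)
  also have "\<dots> \<longleftrightarrow> 6*q3 < 5 - 2*q1"
    by (auto simp: field_simps)
  finally show ?thesis
    by (simp only: ab_weighted_churn_eq)
qed

theorem lemma1:
  fixes \<alpha> q1 q3 :: real
  assumes "0 < \<alpha>" "\<alpha> < 1/2"
    and "0 < q1" "q1 < 1" "0 < q3" "q3 < 1"
    and "((4*\<alpha> - 3)*q1 + 8*\<alpha> + 3) / (12*\<alpha> + 3) < q3"
    and "q3 < (5 - 2*q1) / 6"
    and "(q1 < 1/4 \<and> 1/4 < \<alpha>) \<or> (\<alpha> < 1/4 \<and> 1/4 < q1)"
  shows
    "let m33 = 16*\<alpha>;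
         m31 = 8*(1 - 2*\<alpha>)/3;
         m13 = 8*(1 - 2*\<alpha>)/3;
         m11 = 16*\<alpha>/9;
         m = 16*(4*\<alpha> + 3)/9;
         qstar = (8*\<alpha> + 3)/(8*\<alpha> + 6);
         lstar = 1/m;
         qbar = (1/m) * ((m33 + m31)*q3 + (m13 + m11)*q1);
         lbar = (1/m) * (m33*(1 - q3)/4 + m31*(3*(1 - q3)/4)
                         + m13*(1 - q1)/4 + m11*(3*(1 - q1)/4))
     in qbar > qstar \<and> lbar > lstar"
proof -
  have pos: "0 < 4*\<alpha> + 3" "0 < 12*\<alpha> + 3"
    using \<open>0 < \<alpha>\<close> by auto
  have "(4*\<alpha> - 3)*q1 + 8*\<alpha> + 3 < (12*\<alpha> + 3)*q3"
    using assms(7) pos(2) by (simp add: divide_less_eq mult.commute)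
  moreover have "6*q3 < 5 - 2*q1"
    using assms(8) by simp
  ultimately show ?thesis
    unfolding Let_def
    using ab_quality_gt_status_quo_iff[OF pos(1)] ab_churn_gt_status_quo_iff[OF pos(1)] by blast
qed

end
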